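(* Let $U\subset\mathbb{C}$ be a simply connected domain, $A_1,\dots,A_r$ analytic functions on $U$, $p\in U$ with $A_i(p)\ne A_j(p)$ for $i\ne j$, and $H_i(z)=\Re\int_p^zA_i(w)\,dw$. Let $K$ be the convex hull of $\{A_1(p),\dots,A_r(p)\}$ and assume that the only points $A_i(p)$ lying on the boundary $\partial K$ are extreme points of $K$. Let $S(p)=\{i: A_i(p)\text{ is an extreme point of }K\}$ and $W_i=\{z\in U:\max_{1\le j\le r}H_j(z)=H_i(z)\}$. Then (i) $\max_{1\le i\le r}H_i(z)=\max_{i\in S(p)}H_i(z)$ in a neighborhood of $p$; (ii) there is a neighborhood $N$ of $p$ such that $\bigcup_{i\in S(p)}(N\cap W_i)=N$. *)

theory Defs
  imports "HOL-Complex_Analysis.Complex_Analysis"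
begin

text \<open>Re of the integral of f from p to z along a (chosen) valid path in U.
  For f holomorphic on a simply connected domain U this is independent of the path.\<close>
definition re_path_integral ::
  "complex set \<Rightarrow> (complex \<Rightarrow> complex) \<Rightarrow> complex \<Rightarrow> complex \<Rightarrow> real" where
  "re_path_integral U f p z =
     Re (contour_integral
           (SOME g. valid_path g \<and> path_image g \<subseteq> U \<and> pathstart g = p \<and> pathfinish g = z) f)"

end

theory Submission
  imports Defs
begin

text \<open>Near \<open>p\<close> each \<open>H\<^sub>i\<close> is the linear function \<open>z \<mapsto> Re (A\<^sub>i(p) (z - p))\<close> up to an error
  \<open>o(|z - p|)\<close>. If \<open>A\<^sub>i(p)\<close> is not an extreme point of \<open>K\<close>, it lies in the interior of \<open>K\<close>,
  so some ball \<open>cball (A\<^sub>i(p)) e\<close> lies in \<open>K\<close>, the convex hull of the extreme values. Hence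
  for every direction \<open>d\<close> some extreme value \<open>A\<^sub>k(p)\<close> beats \<open>A\<^sub>i(p)\<close> by \<open>e |d|\<close> in the linear
  functional \<open>Re (\<cdot> d)\<close>, which absorbs the two error terms once \<open>z\<close> is close enough to \<open>p\<close>.\<close>

lemma cball_subset_convex_hull_imp_inner_le:
  fixes a v :: "'a::real_inner"
  assumes "cball a e \<subseteq> convex hull T" "0 \<le> e"
  shows "\<exists>t\<in>T. inner a v + e * norm v \<le> inner t v"
proof (rule ccontr)
  define b where "b = inner a v + e * norm v"
  assume "\<not> (\<exists>t\<in>T. b \<le> inner t v)"
  then have "T \<subseteq> {x. inner v x < b}" by (auto simp: inner_commute)
  then have "convex hull T \<subseteq> {x. inner v x < b}"
    by (rule hull_minimal) (rule convex_halfspace_lt)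
  moreover have "a + e *\<^sub>R sgn v \<in> cball a e"
    using assms(2) by (simp add: dist_norm norm_sgn)
  moreover have "inner v (a + e *\<^sub>R sgn v) = b"
    by (cases "v = 0") (simp_all add: b_def inner_add_right inner_commute sgn_div_norm dot_square_norm
        power2_eq_square field_simps)
  ultimately show False using assms(1) by auto
qed

lemma convex_hull_eq_convex_hull_extreme_image:
  fixes a :: "'i \<Rightarrow> 'a::euclidean_space"
  assumes "finite I"
  shows "convex hull (a ` I) = convex hull (a ` {i \<in> I. a i extreme_point_of convex hull (a ` I)})"
proof -
  have "{x. x extreme_point_of convex hull (a ` I)} = a ` {i \<in> I. a i extreme_point_of convex hull (a ` I)}"
    using extreme_points_of_convex_hull[of "a ` I"] by auto
  then show ?thesis
    using Krein_Milman_polytope[of "a ` I"] assms by simp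
qed

lemma has_field_derivative_eventually_approx:
  assumes "(f has_field_derivative d) (at p)" "e > 0"
  shows "\<forall>\<^sub>F z in nhds p. norm (f z - f p - d * (z - p)) \<le> e * norm (z - p)"
proof -
  from assms(1) have "(f has_derivative (*) d) (at p)" by (simp add: has_field_derivative_def)
  then obtain r where "r > 0"
    "\<forall>y. norm (y - p) < r \<longrightarrow> norm (f y - f p - d * (y - p)) \<le> e * norm (y - p)"
    using has_derivative_at_alt assms(2) by metis
  then show ?thesis unfolding eventually_nhds_metric by (metis dist_norm)
qed

lemma Max_image_eq_Max_image_subset:
  fixes f :: "'i \<Rightarrow> 'a::linorder"
  assumes "finite I" "S \<subseteq> I" "\<And>i. i \<in> I \<Longrightarrow> \<exists>k\<in>S. f i \<le> f k"
  shows "Max (f ` I) = Max (f ` S)"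
proof (cases "I = {}")
  case False
  then have "S \<noteq> {}" using assms(3) by blast
  have "finite S" using assms(1,2) by (rule finite_subset[rotated])
  show ?thesis
  proof (rule antisym)
    show "Max (f ` I) \<le> Max (f ` S)"
    proof (subst Max_le_iff)
      show "\<forall>y\<in>f ` I. y \<le> Max (f ` S)"
        using assms(3) \<open>finite S\<close> by (force intro: order.trans Max_ge)
    qed (use assms(1) False in auto)
    show "Max (f ` S) \<le> Max (f ` I)"
      using assms(1,2) \<open>S \<noteq> {}\<close> by (intro Max_mono) auto
  qed
qed (use assms(2) in simp)

lemma re_path_integral_eq_primitive:
  assumes U: "open U" "connected U" and "p \<in> U" "z \<in> U"
    and F: "\<And>w. w \<in> U \<Longrightarrow> (F has_field_derivative f w) (at w)"
  shows "re_path_integral U f p z = Re (F z - F p)"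
proof -
  let ?P = "\<lambda>g. valid_path g \<and> path_image g \<subseteq> U \<and> pathstart g = p \<and> pathfinish g = z"
  obtain g0 where "polynomial_function g0" "path_image g0 \<subseteq> U" "pathstart g0 = p" "pathfinish g0 = z"
    using connected_open_polynomial_connected[OF U \<open>p \<in> U\<close> \<open>z \<in> U\<close>] by blast
  then have "?P g0" by (simp add: valid_path_polynomial_function)
  then have g: "?P (SOME g. ?P g)" by (rule someI[of ?P])
  have "(f has_contour_integral (F z - F p)) (SOME g. ?P g)"
    using contour_integral_primitive[where S=U, OF _ g[THEN conjunct1]] g F
    by (auto intro: has_field_derivative_at_within)
  then show ?thesis
    unfolding re_path_integral_def by (simp add: contour_integral_unique)
qed

lemma eventually_Max_Re_increment_eq_Max_interior_hull:
  fixes G :: "'i \<Rightarrow> complex \<Rightarrow> complex" and a :: "'i \<Rightarrow> complex"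
  assumes "finite I" "S \<subseteq> I"
    and deriv: "\<And>j. j \<in> I \<Longrightarrow> (G j has_field_derivative a j) (at p)"
    and inside: "\<And>i. i \<in> I - S \<Longrightarrow> a i \<in> interior (convex hull (a ` S))"
  shows "\<forall>\<^sub>F z in nhds p.
    Max ((\<lambda>i. Re (G i z - G i p)) ` I) = Max ((\<lambda>i. Re (G i z - G i p)) ` S)"
proof -
  have dominated: "\<forall>\<^sub>F z in nhds p. \<exists>k\<in>S. Re (G i z - G i p) \<le> Re (G k z - G k p)"
    if i: "i \<in> I - S" for i
  proof -
    obtain e where "e > 0" and ball: "cball (a i) e \<subseteq> convex hull (a ` S)"
      using inside[OF i] mem_interior_cball by blast
    have "\<forall>\<^sub>F z in nhds p. \<forall>j\<in>I. norm (G j z - G j p - a j * (z - p)) \<le> e/2 * norm (z - p)"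
      using deriv \<open>e > 0\<close> \<open>finite I\<close>
      by (intro eventually_ball_finite ballI has_field_derivative_eventually_approx) auto
    then show ?thesis
    proof eventually_elim
      case (elim z)
      define d where "d = z - p"
      obtain k where "k \<in> S" and k: "Re (a i * d) + e * norm d \<le> Re (a k * d)"
        using cball_subset_convex_hull_imp_inner_le[OF ball, of "cnj d"] \<open>e > 0\<close>
        by (auto simp: inner_complex_def)
      have approx: "norm (G j z - G j p - a j * d) \<le> e/2 * norm d" if "j \<in> I" for j
        using elim that by (simp add: d_def)
      have "Re (G i z - G i p) \<le> Re (a i * d) + e/2 * norm d"
        using approx[of i] i complex_Re_le_cmod[of "G i z - G i p - a i * d"]
        unfolding minus_complex.sel by auto
      also have "\<dots> \<le> Re (a k * d) - e/2 * norm d"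
        using k by simp
      also have "\<dots> \<le> Re (G k z - G k p)"
        using approx[of k] \<open>k \<in> S\<close> assms(2) abs_Re_le_cmod[of "G k z - G k p - a k * d"]
        unfolding minus_complex.sel by auto
      finally show ?case using \<open>k \<in> S\<close> by blast
    qed
  qed
  have "\<forall>\<^sub>F z in nhds p. \<forall>i\<in>I - S. \<exists>k\<in>S. Re (G i z - G i p) \<le> Re (G k z - G k p)"
    using dominated \<open>finite I\<close> by (intro eventually_ball_finite) auto
  then show ?thesis
  proof eventually_elim
    case (elim z)
    then show ?case
      using assms(1,2) by (intro Max_image_eq_Max_image_subset) auto
  qed
qed

lemma eventually_Max_re_path_integral_eq_Max_interior_hull:
  fixes f :: "'i \<Rightarrow> complex \<Rightarrow> complex"
  assumes U: "open U" "simply_connected U" and "p \<in> U" "finite I" "S \<subseteq> I"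
    and hol: "\<And>j. j \<in> I \<Longrightarrow> f j holomorphic_on U"
    and inside: "\<And>i. i \<in> I - S \<Longrightarrow> f i p \<in> interior (convex hull ((\<lambda>j. f j p) ` S))"
  shows "\<forall>\<^sub>F z in nhds p.
    Max ((\<lambda>i. re_path_integral U (f i) p z) ` I) = Max ((\<lambda>i. re_path_integral U (f i) p z) ` S)"
proof -
  have "\<forall>j\<in>I. \<exists>Fj. \<forall>z\<in>U. (Fj has_field_derivative f j z) (at z)"
    using U(2) hol unfolding simply_connected_eq_global_primitive[OF U(1)] by blast
  then obtain F where F: "\<forall>j\<in>I. \<forall>z\<in>U. (F j has_field_derivative f j z) (at z)"
    by metis
  have "\<forall>\<^sub>F z in nhds p. Max ((\<lambda>i. Re (F i z - F i p)) ` I) = Max ((\<lambda>i. Re (F i z - F i p)) ` S)"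
    using assms(3-5) inside F by (intro eventually_Max_Re_increment_eq_Max_interior_hull) auto
  then show ?thesis
    using eventually_nhds_in_open[OF U(1) \<open>p \<in> U\<close>]
  proof eventually_elim
    case (elim z)
    have "(\<lambda>i. re_path_integral U (f i) p z) ` J = (\<lambda>i. Re (F i z - F i p)) ` J" if "J \<subseteq> I" for J
      using that elim(2) F U \<open>p \<in> U\<close> simply_connected_imp_connected
      by (intro image_cong re_path_integral_eq_primitive) auto
    then show ?case using elim(1) \<open>S \<subseteq> I\<close> by simp
  qed
qed

lemma eventually_Max_eq_imp_open_cover:
  fixes h :: "'i \<Rightarrow> 'a::topological_space \<Rightarrow> 'b::linorder"
  assumes "finite S" "S \<noteq> {}" "open U" "p \<in> U"
    and "\<forall>\<^sub>F z in nhds p. M z = Max ((\<lambda>i. h i z) ` S)"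
  shows "\<exists>N. open N \<and> p \<in> N \<and> (\<Union>i\<in>S. N \<inter> {z \<in> U. M z = h i z}) = N"
proof -
  have "\<forall>\<^sub>F z in nhds p. z \<in> U \<and> M z = Max ((\<lambda>i. h i z) ` S)"
    using eventually_nhds_in_open[OF assms(3,4)] assms(5) by (rule eventually_conj)
  then obtain N where N: "open N" "p \<in> N" "\<And>z. z \<in> N \<Longrightarrow> z \<in> U \<and> M z = Max ((\<lambda>i. h i z) ` S)"
    unfolding eventually_nhds by blast
  have "\<exists>k\<in>S. z \<in> U \<and> M z = h k z" if "z \<in> N" for z
  proof -
    have "Max ((\<lambda>i. h i z) ` S) \<in> (\<lambda>i. h i z) ` S" using assms(1,2) by (intro Max_in) auto
    then show ?thesis using N(3)[OF that] by force
  qed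
  then show ?thesis using N(1,2) by blast
qed

theorem lemma6:
  fixes U :: "complex set" and A :: "nat \<Rightarrow> complex \<Rightarrow> complex"
    and p :: complex and r :: nat
    and H :: "nat \<Rightarrow> complex \<Rightarrow> real"
    and K :: "complex set" and S :: "nat set" and W :: "nat \<Rightarrow> complex set"
  assumes U: "open U" "connected U" "simply_connected U"
    and r: "r \<ge> 1"
    and hol: "\<And>i. i \<in> {1..r} \<Longrightarrow> A i holomorphic_on U"
    and p: "p \<in> U"
    and dist: "\<And>i j. i \<in> {1..r} \<Longrightarrow> j \<in> {1..r} \<Longrightarrow> i \<noteq> j \<Longrightarrow> A i p \<noteq> A j p"
    and H_def: "\<And>i z. H i z = re_path_integral U (A i) p z"
    and K_def: "K = convex hull ((\<lambda>i. A i p) ` {1..r})"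
    and bdry: "\<And>i. i \<in> {1..r} \<Longrightarrow> A i p \<in> frontier K \<Longrightarrow> A i p extreme_point_of K"
    and S_def: "S = {i \<in> {1..r}. A i p extreme_point_of K}"
    and W_def: "\<And>i. W i = {z \<in> U. Max ((\<lambda>j. H j z) ` {1..r}) = H i z}"
  shows "(\<forall>\<^sub>F z in nhds p. Max ((\<lambda>i. H i z) ` {1..r}) = Max ((\<lambda>i. H i z) ` S))
    \<and> (\<exists>N. open N \<and> p \<in> N \<and> (\<Union>i\<in>S. N \<inter> W i) = N)"
proof -
  define a where "a i = A i p" for i
  have K_a: "K = convex hull (a ` {1..r})" by (simp add: K_def a_def)
  have K_eq: "K = convex hull (a ` S)"
    using convex_hull_eq_convex_hull_extreme_image[of "{1..r}" a] unfolding K_a S_def a_def by simp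
  have "a i \<in> interior K" if "i \<in> {1..r} - S" for i
  proof -
    have "a i \<in> K" using that unfolding K_a by (auto intro: hull_inc)
    then show ?thesis
      using bdry[of i] closure_subset that unfolding frontier_def S_def a_def by auto
  qed
  then have Max_eq: "\<forall>\<^sub>F z in nhds p. Max ((\<lambda>i. H i z) ` {1..r}) = Max ((\<lambda>i. H i z) ` S)"
    unfolding H_def K_eq a_def using U p hol S_def
    by (intro eventually_Max_re_path_integral_eq_Max_interior_hull) auto
  moreover have "\<exists>N. open N \<and> p \<in> N \<and> (\<Union>i\<in>S. N \<inter> W i) = N"
  proof -
    have "S \<noteq> {}" using r K_eq unfolding K_def by auto
    then show ?thesis
      unfolding W_def using S_def U(1) p Max_eq by (intro eventually_Max_eq_imp_open_cover) auto
  qed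
  ultimately show ?thesis ..
qed

end
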